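(* Let $\boldsymbol\alpha\in\mathbb C^d$, let $\boldsymbol\mu\in V(\boldsymbol\alpha)$ satisfy $\mathcal F(\boldsymbol\alpha+\boldsymbol\mu)=\mathcal F(\boldsymbol\alpha)$, and let $\tau$ be a face of the cone $\mathbb R_{\ge0}A$. Then $E_\tau(\boldsymbol\alpha+\boldsymbol\mu)=\emptyset$ if and only if $E_\tau(\boldsymbol\alpha)=\emptyset$. Moreover, if $E_\tau(\boldsymbol\alpha)\ne\emptyset$, then $E_\tau(\boldsymbol\alpha+\boldsymbol\mu)=\boldsymbol\mu+E_\tau(\boldsymbol\alpha)$.
   Context: $A\subset\mathbb Z^d$ is a finite set generating the group $\mathbb Z^d$; $\mathbb NA$ the monoid generated by $A$. For a facet $\sigma$ of the cone $\mathbb R_{\ge0}A$, $F_\sigma$ is its primitive integral support function: the unique linear form on $\mathbb R^d$ (extended $\mathbb C$-linearly to $\mathbb C^d$) with $F_\sigma(\mathbb R_{\ge0}A)\ge0$, $F_\sigma(\sigma)=0$, $F_\sigma(\mathbb Z^d)=\mathbb Z$. For $\boldsymbol\alpha\in\mathbb C^d$, $\mathcal F(\boldsymbol\alpha)=\{\sigma \text{ facet}: F_\sigma(\boldsymbol\alpha)\in\mathbb Z\}$ and $V(\boldsymbol\alpha)=\bigcap_{\sigma\in\mathcal F(\boldsymbol\alpha)}\{F_\sigma=0\}\subseteq\mathbb C^d$. For a face $\tau$, $E_\tau(\boldsymbol\alpha)=\{\boldsymbol\lambda\in\mathbb C(A\cap\tau)/\mathbb Z(A\cap\tau):\boldsymbol\alpha-\boldsymbol\lambda\in\mathbb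 NA+\mathbb Z(A\cap\tau)\}$. *)

theory Defs
  imports "HOL-Analysis.Analysis"
begin

text \<open>Lattice Z^d is int^'n (d = CARD('n)); R^d is real^'n; C^d is complex^'n.\<close>

definition rvec :: "int^'n \<Rightarrow> real^'n" where
  "rvec z = (\<chi> i. of_int (z$i))"

definition cvec :: "int^'n \<Rightarrow> complex^'n" where
  "cvec z = (\<chi> i. of_int (z$i))"

definition polcone :: "(int^'n) set \<Rightarrow> (real^'n) set" where
  "polcone A = {(\<Sum>a\<in>A. c a *\<^sub>R rvec a) | c. \<forall>a\<in>A. c a \<ge> 0}"

definition monoidNA :: "(int^'n) set \<Rightarrow> (int^'n) set" where
  "monoidNA A = {(\<chi> i. \<Sum>a\<in>A. int (c a) * a$i) | c. True}"

definition latspan :: "(int^'n) set \<Rightarrow> (int^'n) set" where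
  "latspan B = {(\<chi> i. \<Sum>a\<in>B. k a * a$i) | k. True}"

definition cspan :: "(int^'n) set \<Rightarrow> (complex^'n) set" where
  "cspan B = {(\<chi> i. \<Sum>a\<in>B. k a * of_int (a$i)) | k. True}"

definition Aface :: "(int^'n) set \<Rightarrow> (real^'n) set \<Rightarrow> (int^'n) set" where
  "Aface A \<tau> = {a\<in>A. rvec a \<in> \<tau>}"

text \<open>Primitive integral support function of a facet, as a real vector w with F(x) = w . x.\<close>
definition supp_vec :: "(int^'n) set \<Rightarrow> (real^'n) set \<Rightarrow> real^'n" where
  "supp_vec A \<sigma> = (THE w. (\<forall>x\<in>polcone A. w \<bullet> x \<ge> 0) \<and> (\<forall>x\<in>\<sigma>. w \<bullet> x = 0)
       \<and> range (\<lambda>z. w \<bullet> rvec z) = \<int>)"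

definition Fval :: "(int^'n) set \<Rightarrow> (real^'n) set \<Rightarrow> complex^'n \<Rightarrow> complex" where
  "Fval A \<sigma> v = (\<Sum>i\<in>UNIV. complex_of_real (supp_vec A \<sigma> $ i) * v$i)"

definition facets :: "(int^'n) set \<Rightarrow> (real^'n) set set" where
  "facets A = {\<sigma>. \<sigma> facet_of polcone A}"

definition Fset :: "(int^'n) set \<Rightarrow> complex^'n \<Rightarrow> (real^'n) set set" where
  "Fset A \<alpha> = {\<sigma>\<in>facets A. Fval A \<sigma> \<alpha> \<in> \<int>}"

definition Vset :: "(int^'n) set \<Rightarrow> complex^'n \<Rightarrow> (complex^'n) set" where
  "Vset A \<alpha> = {v. \<forall>\<sigma>\<in>Fset A \<alpha>. Fval A \<sigma> v = 0}"

text \<open>E_tau(alpha): elements of C(A\<inter>tau)/Z(A\<inter>tau) represented as cosets (sets).\<close>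
definition Eset :: "(int^'n) set \<Rightarrow> (real^'n) set \<Rightarrow> complex^'n \<Rightarrow> (complex^'n) set set" where
  "Eset A \<tau> \<alpha> =
     {{l + cvec z | z. z \<in> latspan (Aface A \<tau>)} | l.
        l \<in> cspan (Aface A \<tau>) \<and>
        \<alpha> - l \<in> cvec ` {x + y | x y. x \<in> monoidNA A \<and> y \<in> latspan (Aface A \<tau>)}}"

end

theory Submission
  imports Defs
begin

(* If E_tau(alpha) is nonempty, write alpha = lambda + z with lambda in C(A cap tau) and z integral.
   For every facet sigma containing tau, F_sigma vanishes on C(A cap tau) and is integral on Z^d,
   so F_sigma(alpha) is an integer and hence F_sigma(mu) = 0.  A vector killed by the support
   functions of all facets through a face tau of a full-dimensional polyhedral cone lies in the span
   of tau (walk from a relative interior point of tau in that direction), and tau is spanned by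
   A cap tau; so mu lies in C(A cap tau) and translation by mu maps E_tau(alpha) onto
   E_tau(alpha + mu).  Since F(alpha + mu) = F(alpha), also -mu lies in V(alpha + mu), which gives
   the converse.  That the support functions F_sigma are well defined comes from cofactor vectors
   of integral bases of the facets, divided by the gcd of their entries. *)

section \<open>Faces and facets of polyhedra\<close>

lemma face_of_conic_contains_0:
  assumes "conic S" "T face_of S" "T \<noteq> {}"
  shows "0 \<in> T"
  using assms conic_contains_0 face_of_conic by blast

lemma face_of_conic_summand:
  assumes "conic S" "T face_of S" "p \<in> S" "q \<in> S" "p + q \<in> T"
  shows "p \<in> T"
proof -
  have "2 *\<^sub>R p \<in> T"
  proof (cases "p = q")
    case True
    then show ?thesis using assms(5) by (simp add: scaleR_2)
  next
    case False
    have "p + q = midpoint (2 *\<^sub>R p) (2 *\<^sub>R q)"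
      by (simp add: midpoint_def algebra_simps)
    then have "p + q \<in> open_segment (2 *\<^sub>R p) (2 *\<^sub>R q)"
      using False by simp
    moreover have "2 *\<^sub>R p \<in> S" "2 *\<^sub>R q \<in> S"
      using assms(1,3,4) by (auto intro: conicD)
    ultimately show ?thesis using face_ofD[OF assms(2)] assms(5) by blast
  qed
  then show ?thesis
    using conicD[OF face_of_conic[OF assms(1,2)], of "2 *\<^sub>R p" "1/2"] by simp
qed

lemma dim_facet_of_full_dim:
  fixes S :: "'a::euclidean_space set"
  assumes "affine hull S = UNIV" "F facet_of S" "0 \<in> F"
  shows "dim F = DIM('a) - 1"
proof -
  have "aff_dim F = int DIM('a) - 1"
    using assms(1,2) aff_dim_affine_hull[of S] by (simp add: facet_of_def)
  then show ?thesis
    using aff_dim_zero[of F] assms(3) by (simp add: hull_inc)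
qed

lemma facet_orthogonal_eq_span:
  fixes S :: "'a::euclidean_space set"
  assumes "affine hull S = UNIV" "F facet_of S" "0 \<in> F" "u \<noteq> 0" "\<forall>x\<in>F. u \<bullet> x = 0"
  shows "{x. u \<bullet> x = 0} = span F"
proof -
  have "span F \<subseteq> {x. u \<bullet> x = 0}"
    using assms(5) by (intro span_minimal) (auto simp: subspace_hyperplane)
  moreover have "dim {x. u \<bullet> x = 0} \<le> dim (span F)"
    using dim_hyperplane[OF assms(4)] dim_facet_of_full_dim[OF assms(1-3)] by simp
  ultimately show ?thesis
    by (metis subspace_dim_equal subspace_hyperplane subspace_span)
qed

lemma facet_normals_parallel:
  fixes S :: "'a::euclidean_space set"
  assumes "affine hull S = UNIV" "F facet_of S" "0 \<in> F" "u \<noteq> 0" "\<forall>x\<in>F. u \<bullet> x = 0"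
    and "\<forall>x\<in>F. w \<bullet> x = 0"
  obtains l where "w = l *\<^sub>R u"
proof
  have "span F \<subseteq> {x. w \<bullet> x = 0}"
    using assms(6) by (intro span_minimal) (auto simp: subspace_hyperplane)
  then have ker: "w \<bullet> x = 0" if "u \<bullet> x = 0" for x
    using facet_orthogonal_eq_span[OF assms(1-5)] that by blast
  define r where "r = w - ((w \<bullet> u) / (u \<bullet> u)) *\<^sub>R u"
  have "u \<bullet> r = 0" using assms(4) by (simp add: r_def inner_diff_right inner_commute)
  then have "r \<bullet> r = 0"
    using ker[of r] by (simp add: r_def inner_diff_left inner_commute)
  then show "w = ((w \<bullet> u) / (u \<bullet> u)) *\<^sub>R u" by (simp add: r_def)
qed

lemma polyhedron_facet_halfspaces:
  fixes S :: "'a::euclidean_space set"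
  assumes "polyhedron S"
  obtains H a b where "finite H" "S = affine hull S \<inter> \<Inter>H"
    "\<And>h y. h \<in> H \<Longrightarrow> y \<in> h \<longleftrightarrow> a h \<bullet> y \<le> b h"
    "\<And>h. h \<in> H \<Longrightarrow> S \<inter> {y. a h \<bullet> y = b h} facet_of S"
proof -
  obtain H where "finite H" and seq: "S = affine hull S \<inter> \<Inter>H"
    and "\<And>h. h \<in> H \<Longrightarrow> \<exists>a b. a \<noteq> 0 \<and> h = {x. a \<bullet> x \<le> b}"
    and min: "\<And>H'. H' \<subset> H \<Longrightarrow> S \<subset> affine hull S \<inter> \<Inter>H'"
    using assms by (simp add: polyhedron_Int_affine_minimal) meson
  then obtain a b where ab: "\<And>h. h \<in> H \<Longrightarrow> a h \<noteq> 0 \<and> h = {x. a h \<bullet> x \<le> b h}"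
    by metis
  show ?thesis
  proof (rule that[OF \<open>finite H\<close> seq])
    show "y \<in> h \<longleftrightarrow> a h \<bullet> y \<le> b h" if "h \<in> H" for h y
      using arg_cong[OF conjunct2[OF ab[OF that]], of "\<lambda>C. y \<in> C"] by simp
    show "S \<inter> {y. a h \<bullet> y = b h} facet_of S" if "h \<in> H" for h
      using facet_of_polyhedron_explicit[OF \<open>finite H\<close> seq ab min] that by blast
  qed
qed

lemma polyhedron_step_inside:
  fixes S :: "'a::euclidean_space set"
  assumes "polyhedron S" "x \<in> S" "x + v \<in> affine hull S"
    and "\<And>F. F facet_of S \<Longrightarrow> x \<in> F \<Longrightarrow> x + v \<in> affine hull F"
  obtains e where "e > 0" "x + e *\<^sub>R v \<in> S"
proof -
  obtain H a b where "finite H" and seq: "S = affine hull S \<inter> \<Inter>H"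
    and mem: "\<And>h y. h \<in> H \<Longrightarrow> y \<in> h \<longleftrightarrow> a h \<bullet> y \<le> b h"
    and facet: "\<And>h. h \<in> H \<Longrightarrow> S \<inter> {y. a h \<bullet> y = b h} facet_of S"
    using polyhedron_facet_halfspaces[OF assms(1)] by blast
  have "\<forall>\<^sub>F e in at_right 0. x + e *\<^sub>R v \<in> h" if h: "h \<in> H" for h
  proof (cases "a h \<bullet> x = b h")
    case True
    have "x + v \<in> affine hull (S \<inter> {y. a h \<bullet> y = b h})"
      by (rule assms(4)[OF facet[OF h]]) (use assms(2) True in auto)
    also have "\<dots> \<subseteq> {y. a h \<bullet> y = b h}"
      by (intro hull_minimal) (auto simp: affine_hyperplane)
    finally have "a h \<bullet> v = 0"
      using True by (simp add: inner_add_right)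
    then show ?thesis
      using True by (intro always_eventually) (simp add: mem[OF h] inner_add_right)
  next
    case False
    moreover have "x \<in> h"
      using seq h assms(2) by blast
    ultimately have "a h \<bullet> x < b h"
      using mem[OF h] by simp
    moreover have "((\<lambda>e. a h \<bullet> (x + e *\<^sub>R v)) \<longlongrightarrow> a h \<bullet> x) (at_right 0)"
      by (auto intro!: tendsto_eq_intros)
    ultimately have "\<forall>\<^sub>F e in at_right 0. a h \<bullet> (x + e *\<^sub>R v) < b h"
      by (simp add: order_tendstoD)
    then show ?thesis
      by (rule eventually_mono) (simp add: mem[OF h])
  qed
  then have "\<forall>\<^sub>F e in at_right 0. e > 0 \<and> (\<forall>h\<in>H. x + e *\<^sub>R v \<in> h)"
    by (simp add: eventually_conj eventually_at_right_less eventually_ball_finite \<open>finite H\<close>)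
  then obtain e where e: "e > 0" "\<forall>h\<in>H. x + e *\<^sub>R v \<in> h"
    using eventually_happens'[OF trivial_limit_at_right_real] by blast
  have "x + e *\<^sub>R v = (1 - e) *\<^sub>R x + e *\<^sub>R (x + v)"
    by (simp add: algebra_simps)
  also have "\<dots> \<in> affine hull S"
    using assms(2,3) by (intro mem_affine affine_affine_hull) (auto intro: hull_inc)
  finally have "x + e *\<^sub>R v \<in> affine hull S \<inter> \<Inter>H"
    using e(2) by blast
  then show ?thesis
    using that e(1) seq by blast
qed

lemma span_face_of_polyhedron:
  fixes S :: "'a::euclidean_space set"
  assumes "polyhedron S" "affine hull S = UNIV" "T face_of S" "0 \<in> T"
    and "\<And>F. F facet_of S \<Longrightarrow> T \<subseteq> F \<Longrightarrow> v \<in> span F"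
  shows "v \<in> span T"
proof (cases "T = S")
  case True
  then show ?thesis
    using assms(2) affine_hull_subset_span by blast
next
  case False
  have TS: "T \<subseteq> S" using assms(3) face_of_imp_subset by blast
  have "rel_interior T \<noteq> {}"
    using assms(3,4) face_of_imp_convex rel_interior_eq_empty by blast
  then obtain x where x: "x \<in> rel_interior T" by blast
  then have xT: "x \<in> T" using rel_interior_subset by blast
  have span_F: "affine hull F = span F" if "T \<subseteq> F" for F
    using that assms(4) by (auto simp: affine_hull_span_0 hull_inc)
  \<comment> \<open>Every facet through the relative interior point x contains T, so v is tangent to it.\<close>
  obtain e where e: "e > 0" "x + e *\<^sub>R v \<in> S"
  proof (rule polyhedron_step_inside[OF assms(1)])
    show "x \<in> S" "x + v \<in> affine hull S" using xT TS assms(2) by auto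
    fix F assume F: "F facet_of S" "x \<in> F"
    then have "T \<subseteq> F"
      using subset_of_face_of[OF facet_of_imp_face_of[OF F(1)] TS] x by blast
    then show "x + v \<in> affine hull F"
      using span_F F assms(5) by (simp add: span_add span_base)
  qed
  have "x + e *\<^sub>R v \<in> F" if F: "F facet_of S" "T \<subseteq> F" for F
  proof -
    have "x + e *\<^sub>R v \<in> affine hull F"
      using span_F F xT assms(5) by (simp add: span_add span_mul span_base subsetD)
    then show ?thesis
      using face_of_imp_eq_affine_Int[OF polyhedron_imp_convex[OF assms(1)] facet_of_imp_face_of[OF F(1)]] e(2)
      by blast
  qed
  then have "x + e *\<^sub>R v \<in> T"
    using face_of_polyhedron[OF assms(1,3) _ False] xT by blast
  then have "(1 / e) *\<^sub>R ((x + e *\<^sub>R v) - x) \<in> span T"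
    using xT by (intro span_mul span_diff span_base)
  then show ?thesis using e(1) by simp
qed

section \<open>Integer vectors\<close>

lemma rvec_eq_0_iff: "rvec z = 0 \<longleftrightarrow> z = 0"
  by (simp add: rvec_def vec_eq_iff)

lemma inj_rvec: "inj rvec"
  by (auto simp: inj_def rvec_def vec_eq_iff)

lemma rvec_smult: "rvec (k *s z) = of_int k *\<^sub>R rvec z"
  by (simp add: rvec_def vec_eq_iff)

definition int_inner :: "int^'n \<Rightarrow> int^'n \<Rightarrow> int" where
  "int_inner c z = (\<Sum>j\<in>UNIV. c$j * z$j)"

lemma rvec_inner_rvec: "rvec c \<bullet> rvec z = of_int (int_inner c z)"
  by (simp add: inner_vec_def rvec_def int_inner_def)

lemma int_inner_diff: "int_inner c (x - y) = int_inner c x - int_inner c y"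
  by (simp add: int_inner_def algebra_simps sum_subtractf)

lemma int_inner_smult: "int_inner c (k *s x) = k * int_inner c x"
  by (simp add: int_inner_def sum_distrib_left algebra_simps)

lemma int_inner_axis: "int_inner c (axis j 1) = c$j"
  by (simp add: int_inner_def axis_def if_distrib cong: if_cong)

lemma least_positive_int_inner_dvd:
  assumes "int_inner c z0 = g" "g > 0" "\<And>z. int_inner c z > 0 \<Longrightarrow> g \<le> int_inner c z"
  shows "g dvd int_inner c z"
proof -
  let ?m = "int_inner c z"
  have "int_inner c (z - (?m div g) *s z0) = ?m mod g"
    by (simp add: int_inner_diff int_inner_smult assms(1) minus_div_mult_eq_mod[symmetric] mult.commute)
  moreover have "0 \<le> ?m mod g" "?m mod g < g"
    using assms(2) by simp_all
  ultimately have "?m mod g = 0"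
    using assms(3)[of "z - (?m div g) *s z0"] by linarith
  then show ?thesis by (simp add: dvd_eq_mod_eq_0)
qed

lemma primitive_vector_exists:
  fixes c :: "int^'n"
  assumes "c \<noteq> 0"
  obtains g w z where "g > 0" "c = g *s w" "int_inner w z = 1"
proof -
  obtain j where "c$j \<noteq> 0"
    using assms by (auto simp: vec_eq_iff)
  then have "int_inner c (sgn (c$j) *s axis j 1) = int (nat \<bar>c$j\<bar>)" "nat \<bar>c$j\<bar> > 0"
    by (auto simp: int_inner_smult int_inner_axis sgn_if)
  then have ex: "\<exists>n. n > 0 \<and> (\<exists>z. int_inner c z = int n)"
    by blast
  define g where "g = (LEAST n. n > 0 \<and> (\<exists>z. int_inner c z = int n))"
  obtain z0 where g: "g > 0" "int_inner c z0 = int g"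
    using LeastI_ex[OF ex] unfolding g_def by blast
  have "int g \<le> int_inner c z" if "int_inner c z > 0" for z
    using Least_le[of "\<lambda>n. n > 0 \<and> (\<exists>z. int_inner c z = int n)" "nat (int_inner c z)"] that
    unfolding g_def by (auto simp: le_nat_iff)
  then have dvd: "int g dvd int_inner c z" for z
    using least_positive_int_inner_dvd[OF g(2)] g(1) by simp
  define w where "w = (\<chi> i. c$i div int g)"
  have cw: "c = int g *s w"
    using dvd[of "axis _ 1"] by (simp add: w_def vec_eq_iff int_inner_axis)
  have "int_inner c z0 = int g * int_inner w z0"
    by (subst cw) (simp add: int_inner_def sum_distrib_left algebra_simps)
  then have "int_inner w z0 = 1"
    using g by simp
  then show ?thesis
    using that[of "int g"] g(1) cw by simp
qed

lemma range_inner_rvec_eq_Ints: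
  assumes "int_inner w z = 1"
  shows "range (\<lambda>y. rvec w \<bullet> rvec y) = \<int>"
proof
  show "range (\<lambda>y. rvec w \<bullet> rvec y) \<subseteq> \<int>"
    by (auto simp: rvec_inner_rvec)
  have "rvec w \<bullet> rvec (k *s z) = of_int k" for k
    using assms by (simp add: rvec_inner_rvec int_inner_smult)
  then show "\<int> \<subseteq> range (\<lambda>y. rvec w \<bullet> rvec y)"
    by (auto elim!: Ints_cases) (metis rangeI)
qed

definition row_cofactors :: "real^'n^'n \<Rightarrow> 'n \<Rightarrow> real^'n" where
  "row_cofactors M k = (\<chi> j. det (\<chi> i. if i = k then axis j 1 else M$i))"

lemma det_replace_row:
  "det (\<chi> i. if i = k then x else M$i) = row_cofactors M k \<bullet> x"
proof -
  have "det (\<chi> i. if i = k then x else M$i) =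
        det (\<chi> i. if i = k then (\<Sum>j\<in>UNIV. x$j *s axis j 1) else M$i)"
    by (simp only: basis_expansion)
  also have "\<dots> = (\<Sum>j\<in>UNIV. det (\<chi> i. if i = k then x$j *s axis j 1 else M$i))"
    by (rule det_linear_row_sum) simp
  also have "\<dots> = (\<Sum>j\<in>UNIV. x$j * det (\<chi> i. if i = k then axis j 1 else M$i))"
    by (simp add: det_row_mul)
  finally show ?thesis
    by (simp add: row_cofactors_def inner_vec_def mult.commute)
qed

lemma row_cofactors_orthogonal:
  assumes "i \<noteq> k"
  shows "row_cofactors M k \<bullet> M$i = 0"
proof -
  have "det (\<chi> i'. if i' = k then M$i else M$i') = 0"
    using assms by (intro det_identical_rows[of k i]) (auto simp: row_def)
  then show ?thesis by (simp add: det_replace_row)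
qed

lemma row_cofactors_nonzero:
  assumes "independent {M$i | i. i \<noteq> k}" "card {M$i | i. i \<noteq> k} = CARD('n) - 1"
  shows "row_cofactors M k \<noteq> (0 :: real^'n)"
proof -
  let ?R = "{M$i | i. i \<noteq> k}"
  have "dim ?R = CARD('n) - 1"
    using assms by (simp add: dim_eq_card_independent)
  then have "dim ?R < DIM(real^'n)"
    by (simp add: card_gt_0_iff)
  then have "span ?R \<noteq> UNIV"
    using dim_eq_full[of ?R] by auto
  then obtain x where x: "x \<notin> span ?R" by auto
  have rows: "rows (\<chi> i. if i = k then x else M$i) = insert x ?R"
    by (auto simp: rows_def row_def)
  have "dim (insert x ?R) = CARD('n)"
    using x \<open>dim ?R = CARD('n) - 1\<close> by (simp add: dim_insert)
  then have "span (rows (\<chi> i. if i = k then x else M$i)) = UNIV"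
    using rows dim_eq_full[of "insert x ?R"] by simp
  then have "det (\<chi> i. if i = k then x else M$i) \<noteq> 0"
    using matrix_left_invertible_span_rows invertible_left_inverse invertible_det_nz by blast
  then show ?thesis by (auto simp: det_replace_row)
qed

lemma row_cofactors_Ints:
  assumes "\<And>i j. M$i$j \<in> \<int>"
  shows "row_cofactors M k $ j \<in> \<int>"
  unfolding row_cofactors_def det_def vec_lambda_beta
  by (intro Ints_sum Ints_mult Ints_prod) (auto simp: axis_def assms)

lemma integer_normal_exists:
  fixes B :: "(int^'n) set"
  assumes "dim (rvec ` B) = CARD('n) - 1"
  obtains c :: "int^'n" where "c \<noteq> 0" "\<forall>x\<in>span (rvec ` B). rvec c \<bullet> x = 0"
proof -
  obtain R where R: "R \<subseteq> rvec ` B" "independent R" "rvec ` B \<subseteq> span R" "card R = dim (rvec ` B)"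
    by (rule basis_exists)
  \<comment> \<open>A basis of span B fills all rows but row k; the cofactors of row k form an integral normal.\<close>
  obtain k :: 'n where True by simp
  have "card (UNIV - {k}) = card R"
    using R(4) assms by (simp add: card_Diff_singleton)
  moreover have "finite R"
    using R(2) finiteI_independent by blast
  ultimately obtain g where g: "bij_betw g (UNIV - {k}) R"
    using finite_same_card_bij[of "UNIV - {k}" R] by auto
  define M :: "real^'n^'n" where "M = (\<chi> i. if i = k then 0 else g i)"
  have "{M$i | i. i \<noteq> k} = g ` (UNIV - {k})"
    by (auto simp: M_def)
  then have rows: "{M$i | i. i \<noteq> k} = R"
    using bij_betw_imp_surj_on[OF g] by simp
  have "M$i$j \<in> \<int>" for i j
  proof (cases "i = k")
    case False
    then obtain b where "g i = rvec b"
      using bij_betwE[OF g] R(1) by blast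
    then show ?thesis using False by (simp add: M_def rvec_def)
  qed (simp add: M_def)
  then have ints: "row_cofactors M k $ j \<in> \<int>" for j
    by (rule row_cofactors_Ints)
  define c where "c = (\<chi> j. \<lfloor>row_cofactors M k $ j\<rfloor>)"
  have c: "rvec c = row_cofactors M k"
    using ints by (auto simp: rvec_def c_def vec_eq_iff elim!: Ints_cases)
  have "rvec c \<bullet> r = 0" if "r \<in> R" for r
    using that rows c row_cofactors_orthogonal by force
  then have "span R \<subseteq> {x. rvec c \<bullet> x = 0}"
    by (intro span_minimal) (auto simp: subspace_hyperplane)
  moreover have "span (rvec ` B) = span R"
    using R(1,3) by (auto simp: span_eq intro: span_base)
  moreover have "row_cofactors M k \<noteq> 0"
    using row_cofactors_nonzero[of M k] rows R(2,4) assms by simp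
  then have "c \<noteq> 0"
    using c by (auto simp: rvec_eq_0_iff[symmetric])
  ultimately show ?thesis
    using that by blast
qed

section \<open>The cone generated by A\<close>

lemma polcone_eq_convex_cone_hull:
  fixes A :: "(int^'n) set"
  assumes "finite A"
  shows "polcone A = convex_cone hull (rvec ` A)"
proof
  have "(\<Sum>a\<in>B. c a *\<^sub>R rvec a) \<in> convex_cone hull (rvec ` A)"
    if "finite B" "B \<subseteq> A" "\<forall>a\<in>B. c a \<ge> 0" for B c
    using that
    by (induction B rule: finite_induct)
       (simp_all add: convex_cone_hull_contains_0 convex_cone_hull_add convex_cone_hull_mul hull_inc)
  then show "polcone A \<subseteq> convex_cone hull (rvec ` A)"
    using assms by (auto simp: polcone_def)
next
  have "convex_cone (polcone A)"
    unfolding convex_cone_iff polcone_def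
  proof (intro conjI ballI allI impI)
    show "0 \<in> {\<Sum>a\<in>A. c a *\<^sub>R rvec a |c. \<forall>a\<in>A. 0 \<le> c a}"
      by (auto intro!: exI[of _ "\<lambda>_. 0"])
  next
    fix x y assume "x \<in> {\<Sum>a\<in>A. c a *\<^sub>R rvec a |c. \<forall>a\<in>A. 0 \<le> c a}"
      "y \<in> {\<Sum>a\<in>A. c a *\<^sub>R rvec a |c. \<forall>a\<in>A. 0 \<le> c a}"
    then obtain c d where "x = (\<Sum>a\<in>A. c a *\<^sub>R rvec a)" "\<forall>a\<in>A. 0 \<le> c a"
      "y = (\<Sum>a\<in>A. d a *\<^sub>R rvec a)" "\<forall>a\<in>A. 0 \<le> d a" by blast
    then show "x + y \<in> {\<Sum>a\<in>A. c a *\<^sub>R rvec a |c. \<forall>a\<in>A. 0 \<le> c a}"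
      by (auto simp: scaleR_add_left sum.distrib intro!: exI[of _ "\<lambda>a. c a + d a"])
  next
    fix x and t :: real assume "x \<in> {\<Sum>a\<in>A. c a *\<^sub>R rvec a |c. \<forall>a\<in>A. 0 \<le> c a}" "0 \<le> t"
    then obtain c where "x = (\<Sum>a\<in>A. c a *\<^sub>R rvec a)" "\<forall>a\<in>A. 0 \<le> c a" by blast
    then show "t *\<^sub>R x \<in> {\<Sum>a\<in>A. c a *\<^sub>R rvec a |c. \<forall>a\<in>A. 0 \<le> c a}"
      using \<open>0 \<le> t\<close> by (auto simp: scaleR_sum_right intro!: exI[of _ "\<lambda>a. t * c a"])
  qed
  moreover have "rvec a \<in> polcone A" if "a \<in> A" for a
  proof -
    have "(\<Sum>b\<in>A. (if b = a then 1 else 0) *\<^sub>R rvec b) = rvec a"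
      using that assms by (simp add: if_distrib[of "\<lambda>t. t *\<^sub>R _"] cong: if_cong)
    then show ?thesis
      unfolding polcone_def by (force intro!: exI[of _ "\<lambda>b. if b = a then 1 else 0"])
  qed
  ultimately show "convex_cone hull (rvec ` A) \<subseteq> polcone A"
    by (intro hull_minimal) auto
qed

lemma polyhedron_polcone: "finite A \<Longrightarrow> polyhedron (polcone A)"
  by (simp add: polcone_eq_convex_cone_hull polyhedron_convex_cone_hull)

lemma conic_polcone: "finite A \<Longrightarrow> conic (polcone A)"
  by (simp add: polcone_eq_convex_cone_hull conic_convex_cone_hull)

lemma span_rvec_eq_UNIV:
  fixes A :: "(int^'n) set"
  assumes "latspan A = UNIV"
  shows "span (rvec ` A) = UNIV"
proof -
  have "axis i 1 \<in> span (rvec ` A)" for i :: 'n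
  proof -
    have "(axis i 1 :: int^'n) \<in> latspan A" using assms by simp
    then obtain k where k: "(axis i 1 :: int^'n) = (\<chi> j. \<Sum>a\<in>A. k a * a$j)"
      by (auto simp: latspan_def)
    have "(axis i 1 :: real^'n) = rvec (axis i 1)"
      by (simp add: rvec_def axis_def vec_eq_iff)
    also have "\<dots> = (\<Sum>a\<in>A. of_int (k a) *\<^sub>R rvec a)"
      by (subst k) (simp add: rvec_def vec_eq_iff)
    also have "\<dots> \<in> span (rvec ` A)"
      by (intro span_sum span_mul span_base) auto
    finally show ?thesis .
  qed
  then have "Basis \<subseteq> span (rvec ` A)"
    by (auto simp: Basis_vec_def)
  then show ?thesis
    using span_mono span_Basis span_span by (metis top.extremum_uniqueI)
qed

lemma affine_hull_polcone:
  fixes A :: "(int^'n) set"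
  assumes "finite A" "latspan A = UNIV"
  shows "affine hull (polcone A) = UNIV"
proof -
  have "rvec ` A \<subseteq> polcone A" "0 \<in> polcone A"
    using assms(1) by (simp_all add: polcone_eq_convex_cone_hull hull_subset convex_cone_hull_contains_0)
  then have "span (polcone A) = UNIV"
    using span_mono[of "rvec ` A" "polcone A"] span_rvec_eq_UNIV[OF assms(2)] by auto
  then show ?thesis
    using affine_hull_span_0[of "polcone A"] \<open>0 \<in> polcone A\<close> by (simp add: hull_inc)
qed

lemma facet_of_polcone_contains_0:
  "finite A \<Longrightarrow> F facet_of polcone A \<Longrightarrow> 0 \<in> F"
  by (auto intro: face_of_conic_contains_0 conic_polcone simp: facet_of_def)

lemma face_subset_span_Aface:
  fixes A :: "(int^'n) set"
  assumes "finite A" "T face_of polcone A"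
  shows "T \<subseteq> span (rvec ` Aface A T)"
proof
  fix x assume "x \<in> T"
  then have "x \<in> polcone A" using assms(2) face_of_imp_subset by blast
  then obtain c where c: "x = (\<Sum>a\<in>A. c a *\<^sub>R rvec a)" "\<forall>a\<in>A. c a \<ge> 0"
    by (auto simp: polcone_def)
  have "c a = 0" if "a \<in> A" "a \<notin> Aface A T" for a
  proof (rule ccontr)
    assume "c a \<noteq> 0"
    then have "c a > 0" using c(2) that(1) by force
    have "x = c a *\<^sub>R rvec a + (\<Sum>b\<in>A-{a}. c b *\<^sub>R rvec b)"
      using c(1) assms(1) that(1) by (simp add: sum.remove)
    moreover have "c a *\<^sub>R rvec a \<in> polcone A"
      using conic_polcone[OF assms(1)] c(2) that(1) assms(1)
      by (intro conicD) (auto simp: polcone_eq_convex_cone_hull hull_inc)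
    moreover have "(\<Sum>b\<in>A-{a}. c b *\<^sub>R rvec b) \<in> polcone A"
      unfolding polcone_def
      by (intro CollectI exI[of _ "\<lambda>b. if b = a then 0 else c b"])
         (use c(2) assms(1) that(1) in \<open>auto simp: sum.remove if_distrib cong: if_cong\<close>)
    ultimately have "c a *\<^sub>R rvec a \<in> T"
      using face_of_conic_summand[OF conic_polcone[OF assms(1)] assms(2)] \<open>x \<in> T\<close> by simp
    then have "rvec a \<in> T"
      using conicD[OF face_of_conic[OF conic_polcone[OF assms(1)] assms(2)], of "c a *\<^sub>R rvec a" "1 / c a"]
        \<open>c a > 0\<close> by simp
    then show False using that \<open>c a > 0\<close> by (simp add: Aface_def)
  qed
  then have "x = (\<Sum>a\<in>Aface A T. c a *\<^sub>R rvec a)"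
    unfolding c(1) using assms(1) by (intro sum.mono_neutral_right) (auto simp: Aface_def)
  also have "\<dots> \<in> span (rvec ` Aface A T)"
    by (intro span_sum span_mul span_base) auto
  finally show "x \<in> span (rvec ` Aface A T)" .
qed

section \<open>Primitive support functions of facets\<close>

definition primitive_support :: "(int^'n) set \<Rightarrow> (real^'n) set \<Rightarrow> real^'n \<Rightarrow> bool" where
  "primitive_support A \<sigma> w \<longleftrightarrow> (\<forall>x\<in>polcone A. w \<bullet> x \<ge> 0) \<and> (\<forall>x\<in>\<sigma>. w \<bullet> x = 0)
     \<and> range (\<lambda>z. w \<bullet> rvec z) = \<int>"

lemma primitive_support_attains_1:
  assumes "primitive_support A \<sigma> w"
  obtains z where "w \<bullet> rvec z = 1"
  using assms unfolding primitive_support_def by (metis Ints_1 rangeE)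

lemma primitive_support_nonzero: "primitive_support A \<sigma> w \<Longrightarrow> w \<noteq> 0"
  by (erule primitive_support_attains_1) auto

lemma primitive_support_unique:
  fixes A :: "(int^'n) set"
  assumes "finite A" "latspan A = UNIV" "F facet_of polcone A"
    and w1: "primitive_support A F w1" and w2: "primitive_support A F w2"
  shows "w1 = w2"
proof -
  note hull = affine_hull_polcone[OF assms(1,2)]
  note F0 = facet_of_polcone_contains_0[OF assms(1,3)]
  obtain l where l: "w2 = l *\<^sub>R w1"
    using facet_normals_parallel[OF hull assms(3) F0 primitive_support_nonzero[OF w1]] w1 w2
    unfolding primitive_support_def by blast
  obtain z1 where z1: "w1 \<bullet> rvec z1 = 1" using primitive_support_attains_1[OF w1] .
  obtain z2 where z2: "w2 \<bullet> rvec z2 = 1" using primitive_support_attains_1[OF w2] .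
  have "w2 \<bullet> rvec z1 \<in> \<int>" "w1 \<bullet> rvec z2 \<in> \<int>"
    using w1 w2 unfolding primitive_support_def by blast+
  moreover have "w2 \<bullet> rvec z1 = l"
    using l z1 by simp
  ultimately obtain m n where mn: "l = of_int m" "w1 \<bullet> rvec z2 = of_int n"
    by (auto elim!: Ints_cases)
  have "of_int (m * n) = (1::real)" using z2 l mn by simp
  then have "m = 1 \<or> m = -1" using pos_zmult_eq_1_iff_lemma of_int_eq_1_iff by blast
  obtain y where y: "y \<in> polcone A" "w1 \<bullet> y \<noteq> 0"
  proof (rule ccontr)
    assume "\<not> thesis"
    then have "affine hull polcone A \<subseteq> {x. w1 \<bullet> x = 0}"
      using that by (intro hull_minimal) (auto simp: affine_hyperplane)
    then have "w1 \<bullet> w1 = 0" using hull by blast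
    then show False using primitive_support_nonzero[OF w1] by simp
  qed
  then have "w1 \<bullet> y > 0" "l * (w1 \<bullet> y) \<ge> 0"
    using w1 w2 l unfolding primitive_support_def by force+
  then have "l \<ge> 0" by (simp add: zero_le_mult_iff)
  then show ?thesis
    using \<open>m = 1 \<or> m = -1\<close> mn l by auto
qed

lemma facet_primitive_normal_exists:
  fixes A :: "(int^'n) set"
  assumes "finite A" "latspan A = UNIV" "F facet_of polcone A"
  obtains w z where "int_inner w z = 1" "\<forall>x\<in>F. rvec w \<bullet> x = 0"
proof -
  have span: "span (rvec ` Aface A F) = span F"
    using face_subset_span_Aface[OF assms(1) facet_of_imp_face_of[OF assms(3)]]
    by (auto simp: span_eq Aface_def intro: span_base)
  then have "dim (rvec ` Aface A F) = CARD('n) - 1"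
    using dim_facet_of_full_dim[OF affine_hull_polcone[OF assms(1,2)] assms(3)]
      facet_of_polcone_contains_0[OF assms(1,3)] dim_span[of "rvec ` Aface A F"] dim_span[of F]
    by simp
  then obtain c where c: "c \<noteq> 0" "\<forall>x\<in>span (rvec ` Aface A F). rvec c \<bullet> x = 0"
    by (rule integer_normal_exists)
  obtain g w z where wg: "g > 0" "c = g *s w" "int_inner w z = 1"
    using primitive_vector_exists[OF c(1)] .
  have "\<forall>x\<in>F. rvec w \<bullet> x = 0"
    using c(2) wg(1,2) span by (simp add: rvec_smult span_base)
  then show ?thesis
    using that wg(3) by blast
qed

lemma primitive_support_exists:
  fixes A :: "(int^'n) set"
  assumes "finite A" "latspan A = UNIV" "F facet_of polcone A"
  obtains w where "primitive_support A F w"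
proof -
  note F0 = facet_of_polcone_contains_0[OF assms(1,3)]
  obtain w z where wz: "int_inner w z = 1" and wF: "\<forall>x\<in>F. rvec w \<bullet> x = 0"
    using facet_primitive_normal_exists[OF assms] .
  obtain a b where ab: "a \<noteq> 0" "polcone A \<subseteq> {x. a \<bullet> x \<le> b}" "F = polcone A \<inter> {x. a \<bullet> x = b}"
    using facet_of_polyhedron[OF polyhedron_polcone[OF assms(1)] assms(3)] by blast
  then have "b = 0" using F0 by auto
  then obtain l where l: "rvec w = l *\<^sub>R a"
    using facet_normals_parallel[OF affine_hull_polcone[OF assms(1,2)] assms(3) F0 ab(1) _ wF] ab(3)
    by auto
  define s :: int where "s = (if l < 0 then 1 else -1)"
  have "l \<noteq> 0"
    using l wz rvec_inner_rvec[of w z] by auto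
  then have "s * l < 0" by (simp add: s_def mult_less_0_iff)
  have "primitive_support A F (rvec (s *s w))"
    unfolding primitive_support_def
  proof (intro conjI ballI)
    fix x assume "x \<in> polcone A"
    then have "a \<bullet> x \<le> 0" using ab(2) \<open>b = 0\<close> by auto
    then show "rvec (s *s w) \<bullet> x \<ge> 0"
      using \<open>s * l < 0\<close> l by (simp add: rvec_smult mult_nonpos_nonpos)
  next
    show "rvec (s *s w) \<bullet> x = 0" if "x \<in> F" for x
      using wF that by (simp add: rvec_smult)
    have "int_inner (s *s w) (s *s z) = 1"
      using wz by (simp add: int_inner_def sum_distrib_left algebra_simps s_def)
    then show "range (\<lambda>y. rvec (s *s w) \<bullet> rvec y) = \<int>"
      by (rule range_inner_rvec_eq_Ints)
  qed
  then show ?thesis using that by blast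
qed

lemma supp_vec_primitive_support:
  fixes A :: "(int^'n) set"
  assumes "finite A" "latspan A = UNIV" "F facet_of polcone A"
  shows "primitive_support A F (supp_vec A F)"
proof -
  obtain w where "primitive_support A F w"
    using primitive_support_exists[OF assms] .
  then have "\<exists>!w. primitive_support A F w"
    using primitive_support_unique[OF assms] by blast
  then show ?thesis
    unfolding supp_vec_def primitive_support_def[symmetric] by (rule theI')
qed

lemma span_Aface_of_supp_vec_orthogonal:
  fixes A :: "(int^'n) set"
  assumes "finite A" "latspan A = UNIV" "T face_of polcone A" "T \<noteq> {}"
    and "\<And>F. F facet_of polcone A \<Longrightarrow> T \<subseteq> F \<Longrightarrow> supp_vec A F \<bullet> v = 0"
  shows "v \<in> span (rvec ` Aface A T)"
proof -
  note hull = affine_hull_polcone[OF assms(1,2)]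
  have T0: "0 \<in> T"
    using face_of_conic_contains_0[OF conic_polcone[OF assms(1)] assms(3,4)] .
  have "v \<in> span T"
  proof (rule span_face_of_polyhedron[OF polyhedron_polcone[OF assms(1)] hull assms(3) T0])
    fix F assume F: "F facet_of polcone A" "T \<subseteq> F"
    note supp = supp_vec_primitive_support[OF assms(1,2) F(1)]
    have "{x. supp_vec A F \<bullet> x = 0} = span F"
      using facet_orthogonal_eq_span[OF hull F(1) _ primitive_support_nonzero[OF supp]] supp T0 F(2)
      by (auto simp: primitive_support_def)
    then show "v \<in> span F" using assms(5)[OF F] by blast
  qed
  then show ?thesis
    using span_minimal[OF face_subset_span_Aface[OF assms(1,3)] subspace_span] by blast
qed

section \<open>Translating the sets E\<close>

lemma Fval_add: "Fval A \<sigma> (u + v) = Fval A \<sigma> u + Fval A \<sigma> v"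
  by (simp add: Fval_def algebra_simps sum.distrib)

lemma Fval_uminus: "Fval A \<sigma> (- v) = - Fval A \<sigma> v"
  by (simp add: Fval_def sum_negf)

lemma Fval_cvec: "Fval A \<sigma> (cvec z) = of_real (supp_vec A \<sigma> \<bullet> rvec z)"
  by (simp add: Fval_def cvec_def rvec_def inner_vec_def)

lemma Re_Fval: "Re (Fval A \<sigma> v) = supp_vec A \<sigma> \<bullet> (\<chi> i. Re (v$i))"
  by (simp add: Fval_def inner_vec_def)

lemma Im_Fval: "Im (Fval A \<sigma> v) = supp_vec A \<sigma> \<bullet> (\<chi> i. Im (v$i))"
  by (simp add: Fval_def inner_vec_def)

lemma Fval_cspan_eq_0:
  assumes "v \<in> cspan B" "\<forall>a\<in>B. supp_vec A \<sigma> \<bullet> rvec a = 0"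
  shows "Fval A \<sigma> v = 0"
proof -
  obtain k where k: "v = (\<chi> i. \<Sum>a\<in>B. k a * of_int (a$i))"
    using assms(1) by (auto simp: cspan_def)
  have "Fval A \<sigma> v = (\<Sum>i\<in>UNIV. \<Sum>a\<in>B. complex_of_real (supp_vec A \<sigma> $ i) * (k a * of_int (a$i)))"
    by (simp add: Fval_def k sum_distrib_left)
  also have "\<dots> = (\<Sum>a\<in>B. k a * of_real (supp_vec A \<sigma> \<bullet> rvec a))"
    by (subst sum.swap) (simp add: inner_vec_def rvec_def sum_distrib_left algebra_simps)
  also have "\<dots> = 0" using assms(2) by simp
  finally show ?thesis .
qed

lemma cspanI: "v = (\<chi> i. \<Sum>a\<in>B. k a * of_int (a$i)) \<Longrightarrow> v \<in> cspan B"
  unfolding cspan_def by blast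

lemma cspan_add:
  assumes "u \<in> cspan B" "v \<in> cspan B"
  shows "u + v \<in> cspan B"
proof -
  obtain k k' where "u = (\<chi> i. \<Sum>a\<in>B. k a * of_int (a$i))" "v = (\<chi> i. \<Sum>a\<in>B. k' a * of_int (a$i))"
    using assms by (auto simp: cspan_def)
  then have "u + v = (\<chi> i. \<Sum>a\<in>B. (k a + k' a) * of_int (a$i))"
    by (simp add: vec_eq_iff algebra_simps sum.distrib)
  then show ?thesis
    by (rule cspanI)
qed

lemma cspan_diff:
  assumes "u \<in> cspan B" "v \<in> cspan B"
  shows "u - v \<in> cspan B"
proof -
  obtain k k' where "u = (\<chi> i. \<Sum>a\<in>B. k a * of_int (a$i))" "v = (\<chi> i. \<Sum>a\<in>B. k' a * of_int (a$i))"
    using assms by (auto simp: cspan_def)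
  then have "u - v = (\<chi> i. \<Sum>a\<in>B. (k a - k' a) * of_int (a$i))"
    by (simp add: vec_eq_iff algebra_simps sum_subtractf)
  then show ?thesis
    by (rule cspanI)
qed

lemma span_rvec_coeffs:
  fixes B :: "(int^'n) set"
  assumes "finite B" "x \<in> span (rvec ` B)"
  obtains u where "x = (\<chi> i. \<Sum>a\<in>B. u a * of_int (a$i))"
proof -
  have "x \<in> range (\<lambda>u. \<Sum>y\<in>rvec ` B. u y *\<^sub>R y)"
    using assms span_finite[of "rvec ` B"] by simp
  then obtain u where "x = (\<Sum>y\<in>rvec ` B. u y *\<^sub>R y)"
    by blast
  also have "\<dots> = (\<Sum>a\<in>B. u (rvec a) *\<^sub>R rvec a)"
    by (simp add: sum.reindex[OF inj_on_subset[OF inj_rvec subset_UNIV]])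
  also have "\<dots> = (\<chi> i. \<Sum>a\<in>B. u (rvec a) * of_int (a$i))"
    by (simp add: vec_eq_iff rvec_def)
  finally show ?thesis by (rule that)
qed

lemma cspan_of_Re_Im:
  fixes B :: "(int^'n) set"
  assumes "finite B" "(\<chi> i. Re (v$i)) \<in> span (rvec ` B)" "(\<chi> i. Im (v$i)) \<in> span (rvec ` B)"
  shows "v \<in> cspan B"
proof -
  obtain u where u: "(\<chi> i. Re (v$i)) = (\<chi> i. \<Sum>a\<in>B. u a * of_int (a$i))"
    using span_rvec_coeffs[OF assms(1,2)] .
  obtain u' where u': "(\<chi> i. Im (v$i)) = (\<chi> i. \<Sum>a\<in>B. u' a * of_int (a$i))"
    using span_rvec_coeffs[OF assms(1,3)] .
  have "(\<Sum>a\<in>B. (of_real (u a) + \<i> * of_real (u' a)) * of_int (a$i)) =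
        of_real (\<Sum>a\<in>B. u a * of_int (a$i)) + \<i> * of_real (\<Sum>a\<in>B. u' a * of_int (a$i))" for i
    by (simp add: distrib_right sum.distrib sum_distrib_left mult.assoc)
  also have "\<dots> i = of_real (Re (v$i)) + \<i> * of_real (Im (v$i))" for i
    using u u' by (simp add: vec_eq_iff)
  also have "\<dots> i = v$i" for i
    by (simp add: complex_eq[symmetric])
  finally show ?thesis
    by (intro cspanI[where k = "\<lambda>a. of_real (u a) + \<i> * of_real (u' a)"]) (simp add: vec_eq_iff)
qed

lemma Vset_subset_cspan_Aface:
  fixes A :: "(int^'n) set"
  assumes "finite A" "latspan A = UNIV" "T face_of polcone A" "T \<noteq> {}" "Eset A T \<alpha> \<noteq> {}"
  shows "Vset A \<alpha> \<subseteq> cspan (Aface A T)"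
proof
  fix \<mu> assume \<mu>: "\<mu> \<in> Vset A \<alpha>"
  obtain l z where l: "l \<in> cspan (Aface A T)" "\<alpha> = l + cvec z"
    using assms(5) unfolding Eset_def by (auto simp: algebra_simps)
  have "Fval A F \<mu> = 0" if F: "F facet_of polcone A" "T \<subseteq> F" for F
  proof -
    note supp = supp_vec_primitive_support[OF assms(1,2) F(1)]
    have "Fval A F l = 0"
      using l(1) supp F(2) by (intro Fval_cspan_eq_0) (auto simp: primitive_support_def Aface_def)
    then have "Fval A F \<alpha> = of_real (supp_vec A F \<bullet> rvec z)"
      by (simp add: l(2) Fval_add Fval_cvec)
    moreover have "supp_vec A F \<bullet> rvec z \<in> \<int>"
      using supp by (auto simp: primitive_support_def)
    ultimately have "F \<in> Fset A \<alpha>"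
      using F(1) by (auto simp: Fset_def facets_def elim!: Ints_cases)
    then show ?thesis using \<mu> by (simp add: Vset_def)
  qed
  then have "(\<chi> i. Re (\<mu>$i)) \<in> span (rvec ` Aface A T)" "(\<chi> i. Im (\<mu>$i)) \<in> span (rvec ` Aface A T)"
    by (auto intro!: span_Aface_of_supp_vec_orthogonal[OF assms(1-4)] simp flip: Re_Fval Im_Fval)
  then show "\<mu> \<in> cspan (Aface A T)"
    using assms(1) by (intro cspan_of_Re_Im) (auto simp: Aface_def)
qed

lemma Eset_translate:
  assumes "\<mu> \<in> cspan (Aface A T)"
  shows "Eset A T (\<alpha> + \<mu>) = (\<lambda>S. (\<lambda>x. \<mu> + x) ` S) ` Eset A T \<alpha>"
proof -
  define coset where "coset l = {l + cvec z | z. z \<in> latspan (Aface A T)}" for l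
  define X where "X = cvec ` {x + y | x y. x \<in> monoidNA A \<and> y \<in> latspan (Aface A T)}"
  have E: "Eset A T \<beta> = coset ` {l \<in> cspan (Aface A T). \<beta> - l \<in> X}" for \<beta>
    by (auto simp: Eset_def coset_def X_def)
  let ?L = "{l \<in> cspan (Aface A T). \<alpha> - l \<in> X}"
  have shift: "{l \<in> cspan (Aface A T). \<alpha> + \<mu> - l \<in> X} = (\<lambda>l. \<mu> + l) ` ?L"
  proof (intro equalityI subsetI)
    fix l assume "l \<in> {l \<in> cspan (Aface A T). \<alpha> + \<mu> - l \<in> X}"
    then have "l - \<mu> \<in> ?L"
      using assms cspan_diff by (auto simp: algebra_simps)
    then show "l \<in> (\<lambda>l. \<mu> + l) ` ?L"
      by (auto intro: image_eqI[of _ _ "l - \<mu>"])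
  qed (use assms cspan_add in auto)
  have "coset (\<mu> + l) = (\<lambda>x. \<mu> + x) ` coset l" for l
    by (auto simp: coset_def add.assoc)
  then have "coset ` (\<lambda>l. \<mu> + l) ` ?L = (\<lambda>S. (\<lambda>x. \<mu> + x) ` S) ` coset ` ?L"
    by (simp only: image_image)
  then show ?thesis
    by (simp only: E shift)
qed

theorem lemma7p2:
  fixes A :: "(int^'n) set" and \<alpha> \<mu> :: "complex^'n" and \<tau> :: "(real^'n) set"
  assumes "finite A" and "latspan A = UNIV"
    and "\<mu> \<in> Vset A \<alpha>" and "Fset A (\<alpha> + \<mu>) = Fset A \<alpha>"
    and "\<tau> face_of polcone A" and "\<tau> \<noteq> {}"
  shows "(Eset A \<tau> (\<alpha> + \<mu>) = {} \<longleftrightarrow> Eset A \<tau> \<alpha> = {}) \<and>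
         (Eset A \<tau> \<alpha> \<noteq> {} \<longrightarrow>
            Eset A \<tau> (\<alpha> + \<mu>) = (\<lambda>S. (\<lambda>x. \<mu> + x) ` S) ` Eset A \<tau> \<alpha>)"
proof -
  note cspan = Vset_subset_cspan_Aface[OF assms(1,2,5,6)]
  have "Eset A \<tau> \<alpha> \<noteq> {}" if "Eset A \<tau> (\<alpha> + \<mu>) \<noteq> {}"
  proof -
    have "- \<mu> \<in> Vset A (\<alpha> + \<mu>)"
      using assms(3,4) by (simp add: Vset_def Fval_uminus)
    then have "Eset A \<tau> (\<alpha> + \<mu> + - \<mu>) = (\<lambda>S. (\<lambda>x. - \<mu> + x) ` S) ` Eset A \<tau> (\<alpha> + \<mu>)"
      using cspan[OF that] by (intro Eset_translate) blast
    then show ?thesis using that by simp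
  qed
  moreover have "Eset A \<tau> (\<alpha> + \<mu>) = (\<lambda>S. (\<lambda>x. \<mu> + x) ` S) ` Eset A \<tau> \<alpha>" if "Eset A \<tau> \<alpha> \<noteq> {}"
    using cspan[OF that] assms(3) by (intro Eset_translate) blast
  ultimately show ?thesis by auto
qed

end
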